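(* Let $A$ be a nonempty finite set of $n$ alternatives and let $\mathcal{F}$ be a nonempty collection of nonempty subsets of $A$ that is downward closed (if $S\in\mathcal{F}$ and $\emptyset\neq S'\subseteq S$ then $S'\in\mathcal{F}$) and contains every singleton $\{a\}$, $a\in A$. A feasibility-constrained choice rule $C$ is (capacity-constrained) lexicographic if and only if it satisfies $\mathcal{F}$-capacity-filling, monotonicity, and the capacity-wise strong axiom of revealed preference (CSARP).
   Context: Let $\mathcal{A}$ be the set of all nonempty subsets of $A$. A feasibility-constrained choice rule is a map $C$ assigning to each $(S,q)\in\mathcal{A}\times\{1,\dots,n\}$ a nonempty set $C(S,q)\subseteq S$ with $C(S,q)\in\mathcal{F}$ and $|C(S,q)|\le q$. Set $C(S,0)=\emptyset$ by convention. A priority ordering is a complete, transitive and antisymmetric binary relation on $A$; a priority profile is a list $(\succ_1,\dots,\succ_n)$ of priority orderings. $C$ is (capacity-constrained) lexicographic if there exists a priority profile $(\succ_1,\dots,\succ_n)$ such that for each $(S,q)$, $C(S,q)$ is obtained as follows: choose the $\succ_1$-highest alternative of $S$; then, for $k=2,\dots,q$, as long as some remaining alternative exists whose addition to the previously chosen alternatives gives a set in $\mathcal{F}$, choose the $\succ_k$-highest alternative among those remaining alternatives of $S$ that form a set in $\mathcal{F}$ together with the previously chosen ones. $\mathcal{F}$-capacity-filling: for each $(S,q)$ and $a\in S$, if $a\notin C(S,q)$ then either $|C(S,q)|=q$ or $C(S,q)\cup\{a\}\notin\mathcal{F}$. Monotonicity: for each $S\in\mathcal{A}$ and $q\in\{1,\dots,n-1\}$,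 $C(S,q)\subseteq C(S,q+1)$. For $q\in\{1,\dots,n\}$ and $a,b\in A$, write $a\mathrel{R^{\mathcal{F}}_q} b$ if there exists $S\in\mathcal{A}$ with $a,b\in S$, $a,b\notin C(S,q-1)$, $a\in C(S,q)$, $b\notin C(S,q)$, and $C(S,q-1)\cup\{b\}\in\mathcal{F}$. CSARP: for each $q\in\{1,\dots,n\}$ the relation $R^{\mathcal{F}}_q$ is acyclic. *)

theory Defs
  imports Main
begin

text \<open>A choice rule is a function
  C :: 'a set \<Rightarrow> nat \<Rightarrow> 'a set; only its values on nonempty subsets S of A
  and capacities q in {1..n} matter. The convention C(S,0) = {} is
  implemented by Cz.\<close>

definition feasibility_family :: "'a set \<Rightarrow> 'a set set \<Rightarrow> bool" where
  "feasibility_family A F \<longleftrightarrow>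
     F \<noteq> {} \<and> (\<forall>S\<in>F. S \<noteq> {} \<and> S \<subseteq> A) \<and>
     (\<forall>S\<in>F. \<forall>S'. S' \<noteq> {} \<and> S' \<subseteq> S \<longrightarrow> S' \<in> F) \<and>
     (\<forall>a\<in>A. {a} \<in> F)"

definition Cz :: "('a set \<Rightarrow> nat \<Rightarrow> 'a set) \<Rightarrow> 'a set \<Rightarrow> nat \<Rightarrow> 'a set" where
  "Cz C S q = (if q = 0 then {} else C S q)"

definition fc_choice_rule :: "'a set \<Rightarrow> 'a set set \<Rightarrow> ('a set \<Rightarrow> nat \<Rightarrow> 'a set) \<Rightarrow> bool" where
  "fc_choice_rule A F C \<longleftrightarrow>
     (\<forall>S q. S \<noteq> {} \<and> S \<subseteq> A \<and> 1 \<le> q \<and> q \<le> card A \<longrightarrow>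
        C S q \<noteq> {} \<and> C S q \<subseteq> S \<and> C S q \<in> F \<and> card (C S q) \<le> q)"

text \<open>The k-th priority ordering is given as a (reflexive) linear order relation on A;
  the p-highest element of a set T is the unique a in T with (a,b) in p for all b in T.\<close>

definition top_elem :: "'a rel \<Rightarrow> 'a set \<Rightarrow> 'a" where
  "top_elem r T = (THE a. a \<in> T \<and> (\<forall>b\<in>T. (a, b) \<in> r))"

fun lex_seq :: "(nat \<Rightarrow> 'a rel) \<Rightarrow> 'a set set \<Rightarrow> 'a set \<Rightarrow> nat \<Rightarrow> 'a set" where
  "lex_seq p F S 0 = {}"
| "lex_seq p F S (Suc k) =
     (let T = lex_seq p F S k; cand = {a \<in> S - T. insert a T \<in> F}
      in if cand = {} then T else insert (top_elem (p (Suc k)) cand) T)"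

definition lexicographic :: "'a set \<Rightarrow> 'a set set \<Rightarrow> ('a set \<Rightarrow> nat \<Rightarrow> 'a set) \<Rightarrow> bool" where
  "lexicographic A F C \<longleftrightarrow>
     (\<exists>p :: nat \<Rightarrow> 'a rel.
        (\<forall>k\<in>{1..card A}. linear_order_on A (p k)) \<and>
        (\<forall>S q. S \<noteq> {} \<and> S \<subseteq> A \<and> 1 \<le> q \<and> q \<le> card A \<longrightarrow> C S q = lex_seq p F S q))"

definition capacity_filling :: "'a set \<Rightarrow> 'a set set \<Rightarrow> ('a set \<Rightarrow> nat \<Rightarrow> 'a set) \<Rightarrow> bool" where
  "capacity_filling A F C \<longleftrightarrow>
     (\<forall>S q a. S \<noteq> {} \<and> S \<subseteq> A \<and> 1 \<le> q \<and> q \<le> card A \<and> a \<in> S \<and> a \<notin> C S q \<longrightarrow>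
        card (C S q) = q \<or> insert a (C S q) \<notin> F)"

definition monotone_rule :: "'a set \<Rightarrow> ('a set \<Rightarrow> nat \<Rightarrow> 'a set) \<Rightarrow> bool" where
  "monotone_rule A C \<longleftrightarrow>
     (\<forall>S q. S \<noteq> {} \<and> S \<subseteq> A \<and> 1 \<le> q \<and> q \<le> card A - 1 \<longrightarrow> C S q \<subseteq> C S (q + 1))"

definition revealed_rel :: "'a set \<Rightarrow> 'a set set \<Rightarrow> ('a set \<Rightarrow> nat \<Rightarrow> 'a set) \<Rightarrow> nat \<Rightarrow> 'a rel" where
  "revealed_rel A F C q = {(a, b). \<exists>S. S \<noteq> {} \<and> S \<subseteq> A \<and> a \<in> S \<and> b \<in> S \<and>
      a \<notin> Cz C S (q - 1) \<and> b \<notin> Cz C S (q - 1) \<and> a \<in> C S q \<and> b \<notin> C S q \<and>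
      insert b (Cz C S (q - 1)) \<in> F}"

definition CSARP :: "'a set \<Rightarrow> 'a set set \<Rightarrow> ('a set \<Rightarrow> nat \<Rightarrow> 'a set) \<Rightarrow> bool" where
  "CSARP A F C \<longleftrightarrow> (\<forall>q\<in>{1..card A}. acyclic (revealed_rel A F C q))"

end

(*
  A lexicographic rule obtains C(S,q) from C(S,q-1) by adding the p_q-best alternative among
  those whose addition keeps the set feasible.  Hence it is monotone and capacity-filling, and
  any pair revealed at capacity q is strictly ordered by p_q, so R_q is acyclic.

  Conversely, extend each acyclic R_q to a linear order p_q and show C(S,q) = lex_seq p F S q
  by induction on q.  Monotonicity makes everything newly chosen at q a feasible addition.  If
  there is a feasible addition, capacity filling gives |C(S,q-1)| = q-1, and the p_q-best
  feasible addition a must be chosen: otherwise either nothing new is chosen, contradicting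
  capacity filling, or some new x is chosen, so x R_q a, contradicting the choice of a.
  Counting then gives C(S,q) = C(S,q-1) \<union> {a}.
*)
theory Submission
  imports Defs
begin

section \<open>Priority orderings and the lexicographic procedure\<close>

lemma linear_order_on_finite_top:
  assumes "linear_order_on A r" "finite T" "T \<noteq> {}" "T \<subseteq> A"
  shows "\<exists>!a. a \<in> T \<and> (\<forall>b\<in>T. (a, b) \<in> r)"
proof -
  have refl: "refl_on A r" and total: "total_on A r" and anti: "antisym r"
    using assms(1) unfolding order_on_defs by auto
  have "acyclic (Restr (r - Id) T)"
    by (rule acyclic_subset[OF linear_order_on_acyclic[OF assms(1)]]) blast
  moreover have "finite (Restr (r - Id) T)"
    by (intro finite_Int disjI2 finite_cartesian_product assms(2))
  ultimately have "wf (Restr (r - Id) T)"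
    by (rule finite_acyclic_wf[rotated])
  then obtain a where a: "a \<in> T" and minimal: "\<And>b. (b, a) \<in> Restr (r - Id) T \<Longrightarrow> b \<notin> T"
    using wfE_min'[OF _ assms(3)] by metis
  have top: "(a, b) \<in> r" if "b \<in> T" for b
  proof (cases "b = a")
    case True
    with refl a assms(4) show ?thesis by (auto simp: refl_on_def)
  next
    case False
    with minimal[of b] that a have "(b, a) \<notin> r" by auto
    with total False that a assms(4) show ?thesis unfolding total_on_def by blast
  qed
  have "c = a" if "c \<in> T" "\<forall>b\<in>T. (c, b) \<in> r" for c
    using that a top anti by (auto dest: antisymD)
  with a top show ?thesis by blast
qed

lemma top_elem:
  assumes "linear_order_on A r" "finite T" "T \<noteq> {}" "T \<subseteq> A"
  shows "top_elem r T \<in> T" and "\<forall>b\<in>T. (top_elem r T, b) \<in> r"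
  using theI'[OF linear_order_on_finite_top[OF assms]] unfolding top_elem_def by blast+

definition feasible_additions :: "'a set set \<Rightarrow> 'a set \<Rightarrow> 'a set \<Rightarrow> 'a set" where
  "feasible_additions F S T = {a \<in> S - T. insert a T \<in> F}"

lemma lex_seq_Suc:
  "lex_seq p F S (Suc k) =
     (let T = lex_seq p F S k
      in if feasible_additions F S T = {} then T
         else insert (top_elem (p (Suc k)) (feasible_additions F S T)) T)"
  unfolding feasible_additions_def by (simp only: lex_seq.simps Let_def)

declare lex_seq.simps(2) [simp del]

lemma lex_seq_Suc_no_addition:
  "feasible_additions F S (lex_seq p F S k) = {} \<Longrightarrow> lex_seq p F S (Suc k) = lex_seq p F S k"
  by (simp add: lex_seq_Suc Let_def)

lemma lex_seq_Suc_top: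
  assumes "linear_order_on A (p (Suc k))" "finite S" "S \<subseteq> A"
    and "feasible_additions F S (lex_seq p F S k) \<noteq> {}"
  obtains a where "a \<in> feasible_additions F S (lex_seq p F S k)"
    and "\<forall>b\<in>feasible_additions F S (lex_seq p F S k). (a, b) \<in> p (Suc k)"
    and "lex_seq p F S (Suc k) = insert a (lex_seq p F S k)"
proof -
  let ?X = "feasible_additions F S (lex_seq p F S k)"
  have "finite ?X" "?X \<subseteq> A"
    using assms(2,3) by (auto simp: feasible_additions_def)
  note top = top_elem[OF assms(1) this(1) assms(4) this(2)]
  show ?thesis
    by (rule that[OF top]) (use assms(4) in \<open>simp add: lex_seq_Suc Let_def\<close>)
qed

lemma lex_seq_subset_Suc: "lex_seq p F S k \<subseteq> lex_seq p F S (Suc k)"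
  by (auto simp: lex_seq_Suc Let_def)

lemma finite_lex_seq: "finite (lex_seq p F S k)"
  by (induction k) (auto simp: lex_seq_Suc Let_def)

lemma lex_seq_capacity_filling:
  assumes "finite S" "S \<subseteq> A" "\<forall>k\<in>{1..q}. linear_order_on A (p k)"
  shows "card (lex_seq p F S q) = q \<or> feasible_additions F S (lex_seq p F S q) = {}"
  using assms(3)
proof (induction q)
  case 0
  then show ?case by simp
next
  case (Suc k)
  let ?T = "lex_seq p F S k"
  show ?case
  proof (cases "feasible_additions F S ?T = {}")
    case True
    then show ?thesis by (simp add: lex_seq_Suc_no_addition)
  next
    case False
    have "linear_order_on A (p (Suc k))"
      using Suc.prems by simp
    then obtain a where "a \<in> feasible_additions F S ?T" "lex_seq p F S (Suc k) = insert a ?T"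
      using lex_seq_Suc_top[OF _ assms(1,2) False] by metis
    moreover have "card ?T = k"
      using Suc False by auto
    ultimately show ?thesis
      by (simp add: finite_lex_seq feasible_additions_def)
  qed
qed

section \<open>Lexicographic rules satisfy the axioms\<close>

definition lex_rationalizes ::
    "'a set \<Rightarrow> 'a set set \<Rightarrow> (nat \<Rightarrow> 'a rel) \<Rightarrow> ('a set \<Rightarrow> nat \<Rightarrow> 'a set) \<Rightarrow> bool" where
  "lex_rationalizes A F p C \<longleftrightarrow>
     (\<forall>k\<in>{1..card A}. linear_order_on A (p k)) \<and>
     (\<forall>S q. S \<noteq> {} \<and> S \<subseteq> A \<and> 1 \<le> q \<and> q \<le> card A \<longrightarrow> C S q = lex_seq p F S q)"

lemma lexicographic_iff_lex_rationalizes: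
  "lexicographic A F C \<longleftrightarrow> (\<exists>p. lex_rationalizes A F p C)"
  by (simp add: lexicographic_def lex_rationalizes_def)

lemma lex_rationalizesD:
  assumes "lex_rationalizes A F p C"
  shows "k \<in> {1..card A} \<Longrightarrow> linear_order_on A (p k)"
    and "S \<noteq> {} \<Longrightarrow> S \<subseteq> A \<Longrightarrow> 1 \<le> q \<Longrightarrow> q \<le> card A \<Longrightarrow> C S q = lex_seq p F S q"
  using assms by (simp_all add: lex_rationalizes_def)

lemma lex_rationalizes_Cz:
  assumes "lex_rationalizes A F p C" "S \<noteq> {}" "S \<subseteq> A" "q \<le> card A"
  shows "Cz C S q = lex_seq p F S q"
  using assms by (cases q) (simp_all add: Cz_def lex_rationalizesD)

lemma lex_rationalizes_capacity_filling:
  assumes "finite A" "lex_rationalizes A F p C"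
  shows "capacity_filling A F C"
  unfolding capacity_filling_def
proof (intro allI impI)
  fix S q a
  assume h: "S \<noteq> {} \<and> S \<subseteq> A \<and> 1 \<le> q \<and> q \<le> card A \<and> a \<in> S \<and> a \<notin> C S q"
  then have "finite S"
    using assms(1) finite_subset by blast
  moreover have "\<forall>k\<in>{1..q}. linear_order_on A (p k)"
    using h lex_rationalizesD(1)[OF assms(2)] by simp
  ultimately have "card (lex_seq p F S q) = q \<or> feasible_additions F S (lex_seq p F S q) = {}"
    using h lex_seq_capacity_filling by blast
  moreover have "C S q = lex_seq p F S q"
    using h lex_rationalizesD(2)[OF assms(2)] by simp
  ultimately show "card (C S q) = q \<or> insert a (C S q) \<notin> F"
    using h by (auto simp: feasible_additions_def)
qed

lemma lex_rationalizes_monotone: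
  assumes "lex_rationalizes A F p C"
  shows "monotone_rule A C"
  unfolding monotone_rule_def
proof (intro allI impI)
  fix S q
  assume "S \<noteq> {} \<and> S \<subseteq> A \<and> 1 \<le> q \<and> q \<le> card A - 1"
  then have "S \<noteq> {}" "S \<subseteq> A" "1 \<le> q" "q + 1 \<le> card A"
    by auto
  then have "C S q = lex_seq p F S q" "C S (q + 1) = lex_seq p F S (Suc q)"
    by (simp_all add: lex_rationalizesD(2)[OF assms])
  then show "C S q \<subseteq> C S (q + 1)"
    using lex_seq_subset_Suc by simp
qed

lemma revealed_rel_subset_priority:
  assumes "finite A" "lex_rationalizes A F p C" "q \<in> {1..card A}"
  shows "revealed_rel A F C q \<subseteq> p q - Id"
proof
  fix z
  assume "z \<in> revealed_rel A F C q"
  then obtain a b S where z: "z = (a, b)" and S: "S \<noteq> {}" "S \<subseteq> A" "a \<in> S" "b \<in> S"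
    and a: "a \<notin> Cz C S (q - 1)" "a \<in> C S q"
    and b: "b \<notin> C S q" "b \<notin> Cz C S (q - 1)" "insert b (Cz C S (q - 1)) \<in> F"
    unfolding revealed_rel_def by blast
  obtain k where k: "q = Suc k"
    using assms(3) by (cases q) auto
  let ?T = "lex_seq p F S k"
  have prev: "Cz C S k = ?T" and now: "C S q = lex_seq p F S (Suc k)"
    using lex_rationalizes_Cz[OF assms(2) S(1,2), of k] lex_rationalizesD(2)[OF assms(2) S(1,2)]
      assms(3) k by simp_all
  have b_feasible: "b \<in> feasible_additions F S ?T"
    using b S(4) prev k by (auto simp: feasible_additions_def)
  have "linear_order_on A (p (Suc k))"
    using lex_rationalizesD(1)[OF assms(2)] assms(3) k by simp
  moreover have "finite S"
    using assms(1) S(2) finite_subset by blast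
  moreover have "feasible_additions F S ?T \<noteq> {}"
    using b_feasible by blast
  ultimately obtain t where top: "\<forall>c\<in>feasible_additions F S ?T. (t, c) \<in> p (Suc k)"
    and chosen: "lex_seq p F S (Suc k) = insert t ?T"
    using lex_seq_Suc_top[OF _ _ S(2)] by metis
  have "a = t"
    using a prev now k chosen by simp
  with top b_feasible k have "(a, b) \<in> p q"
    by simp
  moreover have "a \<noteq> b"
    using a b by blast
  ultimately show "z \<in> p q - Id"
    using z by simp
qed

lemma lex_rationalizes_CSARP:
  assumes "finite A" "lex_rationalizes A F p C"
  shows "CSARP A F C"
  unfolding CSARP_def
proof
  fix q
  assume q: "q \<in> {1..card A}"
  then have "linear_order_on A (p q)"
    by (rule lex_rationalizesD(1)[OF assms(2)])
  then have "acyclic (p q - Id)"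
    by (rule linear_order_on_acyclic)
  then show "acyclic (revealed_rel A F C q)"
    using revealed_rel_subset_priority[OF assms q] acyclic_subset by blast
qed

section \<open>The axioms characterize lexicographic rules\<close>

lemma linear_order_on_insert_bottom:
  assumes "linear_order_on (A - {m}) r" "m \<in> A"
  shows "linear_order_on A (r \<union> {m} \<times> A)"
proof -
  have sub: "r \<subseteq> (A - {m}) \<times> (A - {m})" and refl: "refl_on (A - {m}) r" and "trans r"
    and "antisym r" and total: "total_on (A - {m}) r"
    using assms(1) unfolding order_on_defs by auto
  have "trans (r \<union> {m} \<times> A)"
    using \<open>trans r\<close> sub unfolding trans_def by blast
  moreover have "antisym (r \<union> {m} \<times> A)"
    using \<open>antisym r\<close> sub unfolding antisym_def by blast
  moreover have "refl_on A (r \<union> {m} \<times> A)"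
    using refl unfolding refl_on_def by blast
  moreover have "total_on A (r \<union> {m} \<times> A)"
    using total unfolding total_on_def by blast
  ultimately show ?thesis
    using sub assms(2) unfolding order_on_defs by blast
qed

lemma acyclic_extends_to_linear_order:
  assumes "finite A" "acyclic R" "R \<subseteq> A \<times> A"
  shows "\<exists>r. linear_order_on A r \<and> R \<subseteq> r"
  using assms
proof (induction A arbitrary: R rule: finite_psubset_induct)
  case (psubset A)
  show ?case
  proof (cases "A = {}")
    case True
    then show ?thesis
      using psubset.prems by (intro exI[of _ "{}"]) (auto simp: order_on_defs)
  next
    case False
    have "finite R"
      using psubset.hyps psubset.prems(2) finite_subset by blast
    then have "wf R"
      using psubset.prems(1) by (rule finite_acyclic_wf)
    then obtain m where m: "m \<in> A" and minimal: "\<And>y. (y, m) \<notin> R"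
      using wfE_min'[OF _ False] psubset.prems(2) by (metis mem_Sigma_iff subsetD)
    let ?R = "R \<inter> (A - {m}) \<times> (A - {m})"
    have "acyclic ?R"
      using psubset.prems(1) acyclic_subset by blast
    then obtain r where r: "linear_order_on (A - {m}) r" "?R \<subseteq> r"
      using psubset.IH[of "A - {m}" ?R] m by blast
    have "R \<subseteq> r \<union> {m} \<times> A"
      using r(2) minimal psubset.prems(2) by blast
    with linear_order_on_insert_bottom[OF r(1) m] show ?thesis
      by blast
  qed
qed

lemma revealed_rel_subset_square: "revealed_rel A F C q \<subseteq> A \<times> A"
  unfolding revealed_rel_def by blast

lemma CSARP_linear_extensions:
  assumes "finite A" "CSARP A F C"
  obtains p where "\<forall>k\<in>{1..card A}. linear_order_on A (p k) \<and> revealed_rel A F C k \<subseteq> p k"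
proof -
  have extensions: "\<forall>k\<in>{1..card A}. \<exists>r. linear_order_on A r \<and> revealed_rel A F C k \<subseteq> r"
  proof
    fix k
    assume "k \<in> {1..card A}"
    then have "acyclic (revealed_rel A F C k)"
      using assms(2) by (simp add: CSARP_def)
    then show "\<exists>r. linear_order_on A r \<and> revealed_rel A F C k \<subseteq> r"
      by (rule acyclic_extends_to_linear_order[OF assms(1) _ revealed_rel_subset_square])
  qed
  show ?thesis
    using bchoice[OF extensions] that by blast
qed

lemma feasibility_family_downward_closed:
  assumes "feasibility_family A F" "X \<in> F" "Y \<noteq> {}" "Y \<subseteq> X"
  shows "Y \<in> F"
  using assms unfolding feasibility_family_def by blast

lemma fc_choice_ruleD:
  assumes "fc_choice_rule A F C" "S \<noteq> {}" "S \<subseteq> A" "1 \<le> q" "q \<le> card A"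
  shows "C S q \<subseteq> S" "C S q \<in> F" "card (C S q) \<le> q"
  using assms unfolding fc_choice_rule_def by blast+

lemma capacity_fillingD:
  assumes "capacity_filling A F C" "S \<noteq> {}" "S \<subseteq> A" "1 \<le> q" "q \<le> card A"
    and "a \<in> S" "a \<notin> C S q" "insert a (C S q) \<in> F"
  shows "card (C S q) = q"
  using assms unfolding capacity_filling_def by blast

lemma Cz_subset_C_Suc:
  assumes "monotone_rule A C" "S \<noteq> {}" "S \<subseteq> A" "Suc k \<le> card A"
  shows "Cz C S k \<subseteq> C S (Suc k)"
proof (cases k)
  case 0
  then show ?thesis by (simp add: Cz_def)
next
  case (Suc j)
  then have "1 \<le> k" "k \<le> card A - 1"
    using assms(4) by auto
  then show ?thesis
    using assms(1-3) Suc unfolding monotone_rule_def Cz_def by simp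
qed

lemma capacity_filling_Cz:
  assumes "capacity_filling A F C" "S \<noteq> {}" "S \<subseteq> A" "k \<le> card A"
    and "feasible_additions F S (Cz C S k) \<noteq> {}"
  shows "card (Cz C S k) = k"
proof (cases k)
  case 0
  then show ?thesis by (simp add: Cz_def)
next
  case (Suc j)
  then obtain b where "b \<in> S" "b \<notin> C S k" "insert b (C S k) \<in> F"
    using assms(5) by (auto simp: feasible_additions_def Cz_def)
  then show ?thesis
    using capacity_fillingD[OF assms(1-3) _ assms(4)] Suc by (simp add: Cz_def)
qed

lemma C_Suc_diff_Cz_feasible:
  assumes "feasibility_family A F" "fc_choice_rule A F C" "monotone_rule A C"
    and "S \<noteq> {}" "S \<subseteq> A" "Suc k \<le> card A"
  shows "C S (Suc k) - Cz C S k \<subseteq> feasible_additions F S (Cz C S k)"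
proof
  fix x
  assume x: "x \<in> C S (Suc k) - Cz C S k"
  have "1 \<le> Suc k"
    by simp
  note X = fc_choice_ruleD[OF assms(2,4,5) this assms(6)]
  have "insert x (Cz C S k) \<subseteq> C S (Suc k)"
    using x Cz_subset_C_Suc[OF assms(3-6)] by blast
  then have "insert x (Cz C S k) \<in> F"
    by (rule feasibility_family_downward_closed[OF assms(1) X(2) insert_not_empty])
  with x X(1) show "x \<in> feasible_additions F S (Cz C S k)"
    by (auto simp: feasible_additions_def)
qed

lemma top_feasible_addition_chosen:
  assumes fam: "feasibility_family A F" and rule: "fc_choice_rule A F C"
    and cf: "capacity_filling A F C" and mono: "monotone_rule A C"
    and anti: "antisym r" and rev: "revealed_rel A F C (Suc k) \<subseteq> r"
    and S: "S \<noteq> {}" "S \<subseteq> A" and k: "Suc k \<le> card A"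
    and a: "a \<in> feasible_additions F S (Cz C S k)"
    and top: "\<forall>b\<in>feasible_additions F S (Cz C S k). (a, b) \<in> r"
  shows "a \<in> C S (Suc k)"
proof (rule ccontr)
  let ?T = "Cz C S k" and ?X = "C S (Suc k)"
  assume a_not_chosen: "a \<notin> ?X"
  have TX: "?T \<subseteq> ?X"
    using Cz_subset_C_Suc[OF mono S k] .
  show False
  proof (cases "?X = ?T")
    case True
    have "k \<le> card A" "feasible_additions F S ?T \<noteq> {}"
      using k a by auto
    then have "card ?T = k"
      by (rule capacity_filling_Cz[OF cf S])
    moreover have "card ?X = Suc k"
      using capacity_fillingD[OF cf S _ k, of a] a a_not_chosen True
      by (simp add: feasible_additions_def)
    ultimately show False
      using True by simp
  next
    case False
    then obtain x where x: "x \<in> ?X - ?T"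
      using TX by blast
    then have "(a, x) \<in> r"
      using top C_Suc_diff_Cz_feasible[OF fam rule mono S k] by blast
    moreover have "(x, a) \<in> revealed_rel A F C (Suc k)"
      using S x a a_not_chosen fc_choice_ruleD(1)[OF rule S _ k]
      unfolding revealed_rel_def feasible_additions_def by auto
    ultimately have "x = a"
      using rev anti by (auto dest: antisymD)
    with x a_not_chosen show False
      by blast
  qed
qed

lemma C_Suc_eq_lex_seq_Suc:
  assumes fin: "finite A" and fam: "feasibility_family A F" and rule: "fc_choice_rule A F C"
    and cf: "capacity_filling A F C" and mono: "monotone_rule A C"
    and lin: "linear_order_on A (p (Suc k))" and rev: "revealed_rel A F C (Suc k) \<subseteq> p (Suc k)"
    and S: "S \<noteq> {}" "S \<subseteq> A" and k: "Suc k \<le> card A"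
    and prev: "Cz C S k = lex_seq p F S k"
  shows "C S (Suc k) = lex_seq p F S (Suc k)"
proof (cases "feasible_additions F S (Cz C S k) = {}")
  case True
  then have "C S (Suc k) = Cz C S k"
    using C_Suc_diff_Cz_feasible[OF fam rule mono S k] Cz_subset_C_Suc[OF mono S k] by blast
  with True prev show ?thesis
    by (simp add: lex_seq_Suc_no_addition)
next
  case False
  have "finite S"
    using fin S(2) finite_subset by blast
  then obtain a where a: "a \<in> feasible_additions F S (Cz C S k)"
    and top: "\<forall>b\<in>feasible_additions F S (Cz C S k). (a, b) \<in> p (Suc k)"
    and step: "lex_seq p F S (Suc k) = insert a (Cz C S k)"
    using lex_seq_Suc_top[where p = p and k = k, OF lin \<open>finite S\<close> S(2)] False prev by metis
  have anti: "antisym (p (Suc k))"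
    using lin by (simp add: order_on_defs)
  have "insert a (Cz C S k) \<subseteq> C S (Suc k)"
    using top_feasible_addition_chosen[OF fam rule cf mono anti rev S k a top]
      Cz_subset_C_Suc[OF mono S k] by blast
  moreover have "card (insert a (Cz C S k)) = Suc k"
    using capacity_filling_Cz[OF cf S _ False] k a prev
    by (simp add: feasible_additions_def finite_lex_seq)
  moreover have "finite (C S (Suc k))" "card (C S (Suc k)) \<le> Suc k"
    using fc_choice_ruleD[OF rule S _ k] \<open>finite S\<close> finite_subset by auto
  ultimately show ?thesis
    using step card_seteq by metis
qed

lemma lex_rationalizes_if_revealed_rel_subset:
  assumes "finite A" "feasibility_family A F" "fc_choice_rule A F C"
    and "capacity_filling A F C" "monotone_rule A C"
    and profile: "\<forall>k\<in>{1..card A}. linear_order_on A (p k) \<and> revealed_rel A F C k \<subseteq> p k"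
  shows "lex_rationalizes A F p C"
proof -
  have "Cz C S q = lex_seq p F S q" if S: "S \<noteq> {}" "S \<subseteq> A" and "q \<le> card A" for S q
    using \<open>q \<le> card A\<close>
  proof (induction q)
    case 0
    then show ?case by (simp add: Cz_def)
  next
    case (Suc k)
    then show ?case
      using C_Suc_eq_lex_seq_Suc[OF assms(1-5) _ _ S] profile by (simp add: Cz_def)
  qed
  then show ?thesis
    using profile unfolding lex_rationalizes_def Cz_def by (metis not_one_le_zero)
qed

theorem proposition2:
  fixes A :: "'a set" and F :: "'a set set" and C :: "'a set \<Rightarrow> nat \<Rightarrow> 'a set"
  assumes "finite A" and "A \<noteq> {}"
    and "feasibility_family A F"
    and "fc_choice_rule A F C"
  shows "lexicographic A F C \<longleftrightarrow>
           capacity_filling A F C \<and> monotone_rule A C \<and> CSARP A F C"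
proof
  assume "lexicographic A F C"
  then obtain p where p: "lex_rationalizes A F p C"
    unfolding lexicographic_iff_lex_rationalizes ..
  show "capacity_filling A F C \<and> monotone_rule A C \<and> CSARP A F C"
    using lex_rationalizes_capacity_filling[OF assms(1) p] lex_rationalizes_monotone[OF p]
      lex_rationalizes_CSARP[OF assms(1) p] by blast
next
  assume "capacity_filling A F C \<and> monotone_rule A C \<and> CSARP A F C"
  then have cf: "capacity_filling A F C" and mono: "monotone_rule A C" and csarp: "CSARP A F C"
    by auto
  obtain p where "\<forall>k\<in>{1..card A}. linear_order_on A (p k) \<and> revealed_rel A F C k \<subseteq> p k"
    by (rule CSARP_linear_extensions[OF assms(1) csarp])
  then have "lex_rationalizes A F p C"
    by (rule lex_rationalizes_if_revealed_rel_subset[OF assms(1,3,4) cf mono])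
  then show "lexicographic A F C"
    unfolding lexicographic_iff_lex_rationalizes by blast
qed

end
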